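(* Let $\div$ be an AGM contraction operator for epistemic states. The following are equivalent: (a) $\div$ satisfies (C8) and (C9), i.e. for all epistemic states $\Psi$ and formulas $\alpha,\beta$: (C8) if $\neg\alpha\models\beta$ then $\mathrm{Bel}(\Psi\div\alpha\div\beta) =_\alpha \mathrm{Bel}(\Psi\div\beta)$; (C9) if $\alpha\models\beta$ then $\mathrm{Bel}(\Psi\div\alpha\div\beta) =_{\neg\beta} \mathrm{Bel}(\Psi\div\beta)$. (b) There is a faithful assignment $\Psi\mapsto\le_\Psi$ such that $[\![\Psi\div\alpha]\!]=[\![\Psi]\!]\cup\min([\![\neg\alpha]\!],\le_\Psi)$ for all $\Psi,\alpha$, and which satisfies for all $\Psi,\alpha$ and worlds $\omega_1,\omega_2$: (CR8) if $\omega_1,\omega_2\in[\![\alpha]\!]$ then $\omega_1\le_\Psi\omega_2 \Leftrightarrow \omega_1\le_{\Psi\div\alpha}\omega_2$; (CR9) if $\omega_1,\omega_2\in[\![\neg\alpha]\!]$ then $\omega_1\le_\Psi\omega_2 \Leftrightarrow \omega_1\le_{\Psi\div\alpha}\omega_2$.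
   Context: $\Sigma$ is a nonempty finite set of propositional variables, $\mathcal{L}$ the propositional language over $\Sigma$, $\Omega$ the set of worlds. $[\![\alpha]\!]$ is the set of models of $\alpha$; for a set $X$ of formulas $[\![X]\!]$ is the set of worlds satisfying all of $X$; $Cn(X)=\{\beta\mid X\models\beta\}$. $\mathcal{E}$ is a set of epistemic states; each $\Psi\in\mathcal{E}$ has a deductively closed belief set $\mathrm{Bel}(\Psi)\subseteq\mathcal{L}$; $\Psi\models\alpha$ iff $\alpha\in\mathrm{Bel}(\Psi)$; $[\![\Psi]\!]=[\![\mathrm{Bel}(\Psi)]\!]$. A belief change operator is a map $\div:\mathcal{E}\times\mathcal{L}\to\mathcal{E}$; $\Psi\div\alpha\div\beta$ means $(\Psi\div\alpha)\div\beta$. An AGM contraction operator for epistemic states is a belief change operator satisfying for all $\Psi,\alpha,\beta$: (C1) $\mathrm{Bel}(\Psi\div\alpha)\subseteq\mathrm{Bel}(\Psi)$; (C2) if $\alpha\notin\mathrm{Bel}(\Psi)$ then $\mathrm{Bel}(\Psi)\subseteq\mathrm{Bel}(\Psi\div\alpha)$; (C3) if $\alpha\not\equiv\top$ then $\alpha\notin\mathrm{Bel}(\Psi\div\alpha)$; (C4) $\mathrm{Bel}(\Psi)\subseteq Cn(\mathrm{Bel}(\Psi\div\alpha)\cup\{\alpha\})$; (C5) if $\alpha\equiv\beta$ then $\mathrm{Bel}(\Psi\div\alpha)=\mathrm{Bel}(\Psi\div\beta)$; (C6) $\mathrm{Bel}(\Psi\div\alpha)\cap\mathrm{Bel}(\Psi\div\beta)\subseteq\mathrm{Bel}(\Psi\div(\alpha\land\beta))$;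 (C7) if $\beta\notin\mathrm{Bel}(\Psi\div(\alpha\land\beta))$ then $\mathrm{Bel}(\Psi\div(\alpha\land\beta))\subseteq\mathrm{Bel}(\Psi\div\beta)$. For a total preorder $\le$ on $\Omega$ and $\Omega'\subseteq\Omega$, $\min(\Omega',\le)=\{\omega\in\Omega'\mid \omega\le\omega' \text{ for all }\omega'\in\Omega'\}$; $<$ is the strict part and $\simeq$ the induced equivalence. A faithful assignment maps each $\Psi$ to a total preorder $\le_\Psi$ on $\Omega$ with (FA1) $\omega_1,\omega_2\in[\![\Psi]\!]\Rightarrow\omega_1\simeq_\Psi\omega_2$ and (FA2) $\omega_1\in[\![\Psi]\!],\omega_2\notin[\![\Psi]\!]\Rightarrow\omega_1<_\Psi\omega_2$. Known fact: $\div$ is an AGM contraction operator for epistemic states iff there is a faithful assignment with $[\![\Psi\div\alpha]\!]=[\![\Psi]\!]\cup\min([\![\neg\alpha]\!],\le_\Psi)$ for all $\Psi,\alpha$. $\alpha$-equivalence: for $\Omega_1,\Omega_2\subseteq\Omega$, $\Omega_1=_\alpha\Omega_2$ iff $\Omega_1\cap[\![\alpha]\!]=\Omega_2\cap[\![\alpha]\!]$; for sets of formulas $X=_\alpha Y$ iff $[\![X]\!]=_\alpha[\![Y]\!]$. *)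

theory Defs
  imports Main
begin

text \<open>Propositional language over a finite nonempty signature, given by a
finite type 'v of propositional variables (types are nonempty).\<close>

datatype 'v fm = Var 'v | Top | Bot | Neg "'v fm" | Conj "'v fm" "'v fm"
  | Disj "'v fm" "'v fm" | Imp "'v fm" "'v fm"

type_synonym 'v world = "'v \<Rightarrow> bool"

fun sat :: "'v world \<Rightarrow> 'v fm \<Rightarrow> bool" where
  "sat w (Var p) = w p"
| "sat w Top = True"
| "sat w Bot = False"
| "sat w (Neg a) = (\<not> sat w a)"
| "sat w (Conj a b) = (sat w a \<and> sat w b)"
| "sat w (Disj a b) = (sat w a \<or> sat w b)"
| "sat w (Imp a b) = (sat w a \<longrightarrow> sat w b)"

definition mods :: "'v fm \<Rightarrow> 'v world set" where
  "mods a = {w. sat w a}"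

definition modsSet :: "'v fm set \<Rightarrow> 'v world set" where
  "modsSet X = {w. \<forall>a\<in>X. sat w a}"

definition entails :: "'v fm set \<Rightarrow> 'v fm \<Rightarrow> bool" where
  "entails X b \<longleftrightarrow> modsSet X \<subseteq> mods b"

definition Cn :: "'v fm set \<Rightarrow> 'v fm set" where
  "Cn X = {b. entails X b}"

definition fequiv :: "'v fm \<Rightarrow> 'v fm \<Rightarrow> bool" where
  "fequiv a b \<longleftrightarrow> mods a = mods b"

definition alpha_eq :: "'v fm \<Rightarrow> 'v fm set \<Rightarrow> 'v fm set \<Rightarrow> bool" where
  "alpha_eq a X Y \<longleftrightarrow> modsSet X \<inter> mods a = modsSet Y \<inter> mods a"

text \<open>Epistemic states: an arbitrary type 'e with belief-set function Bel,
required to be deductively closed.\<close>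
definition bel_closed :: "('e \<Rightarrow> 'v fm set) \<Rightarrow> bool" where
  "bel_closed Bel \<longleftrightarrow> (\<forall>\<Psi>. Cn (Bel \<Psi>) = Bel \<Psi>)"

definition agm_contraction ::
  "('e \<Rightarrow> 'v fm set) \<Rightarrow> ('e \<Rightarrow> 'v fm \<Rightarrow> 'e) \<Rightarrow> bool" where
  "agm_contraction Bel c \<longleftrightarrow> (\<forall>\<Psi> a b.
     Bel (c \<Psi> a) \<subseteq> Bel \<Psi>
   \<and> (a \<notin> Bel \<Psi> \<longrightarrow> Bel \<Psi> \<subseteq> Bel (c \<Psi> a))
   \<and> (\<not> fequiv a Top \<longrightarrow> a \<notin> Bel (c \<Psi> a))
   \<and> Bel \<Psi> \<subseteq> Cn (Bel (c \<Psi> a) \<union> {a})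
   \<and> (fequiv a b \<longrightarrow> Bel (c \<Psi> a) = Bel (c \<Psi> b))
   \<and> Bel (c \<Psi> a) \<inter> Bel (c \<Psi> b) \<subseteq> Bel (c \<Psi> (Conj a b))
   \<and> (b \<notin> Bel (c \<Psi> (Conj a b)) \<longrightarrow> Bel (c \<Psi> (Conj a b)) \<subseteq> Bel (c \<Psi> b)))"

definition total_preorder :: "('w \<Rightarrow> 'w \<Rightarrow> bool) \<Rightarrow> bool" where
  "total_preorder le \<longleftrightarrow> (\<forall>x y. le x y \<or> le y x) \<and> (\<forall>x y z. le x y \<longrightarrow> le y z \<longrightarrow> le x z)"

definition minset :: "'w set \<Rightarrow> ('w \<Rightarrow> 'w \<Rightarrow> bool) \<Rightarrow> 'w set" where
  "minset S le = {w \<in> S. \<forall>w'\<in>S. le w w'}"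

definition faithful_assignment ::
  "('e \<Rightarrow> 'v fm set) \<Rightarrow> ('e \<Rightarrow> 'v world \<Rightarrow> 'v world \<Rightarrow> bool) \<Rightarrow> bool" where
  "faithful_assignment Bel ord \<longleftrightarrow> (\<forall>\<Psi>. total_preorder (ord \<Psi>)
     \<and> (\<forall>w1 w2. w1 \<in> modsSet (Bel \<Psi>) \<longrightarrow> w2 \<in> modsSet (Bel \<Psi>)
            \<longrightarrow> ord \<Psi> w1 w2 \<and> ord \<Psi> w2 w1)
     \<and> (\<forall>w1 w2. w1 \<in> modsSet (Bel \<Psi>) \<longrightarrow> w2 \<notin> modsSet (Bel \<Psi>)
            \<longrightarrow> ord \<Psi> w1 w2 \<and> \<not> ord \<Psi> w2 w1))"

end

theory Submission
  imports Defs
begin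

text \<open>Over a finite signature every set \<open>S\<close> of worlds is the set of countermodels of some
formula; let \<open>contr_worlds \<Psi> S\<close> be the set of models of \<open>\<Psi>\<close> contracted by it.
Postulates (C1)--(C7) make \<open>contr_worlds \<Psi> S \<inter> S\<close> a rational choice from \<open>S\<close>, hence the
set of minimal elements of \<open>S\<close> for the relation ``\<open>w\<^sub>1\<close> is chosen from \<open>{w\<^sub>1, w\<^sub>2}\<close>''.
For this ordering (C8) and (C9), applied to the formula whose countermodels are exactly
\<open>{w\<^sub>1, w\<^sub>2}\<close>, say literally that the choice from \<open>{w\<^sub>1, w\<^sub>2}\<close> is unchanged by a prior
contraction by \<open>\<alpha>\<close>, i.e. (CR8) and (CR9).
Conversely, for any representing ordering satisfying (CR8) resp. (CR9), \<open>\<Psi> \<div> \<alpha> \<div> \<beta>\<close> consists of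
\<open>\<Psi> \<div> \<beta>\<close> together with the minimal \<open>\<not>\<alpha>\<close>-worlds; these lie outside \<open>\<alpha>\<close>, and those among
them in \<open>\<not>\<beta> \<subseteq> \<not>\<alpha>\<close> are minimal in \<open>\<not>\<beta>\<close>.\<close>

definition C8 :: "('e \<Rightarrow> 'v fm set) \<Rightarrow> ('e \<Rightarrow> 'v fm \<Rightarrow> 'e) \<Rightarrow> bool" where
  "C8 Bel c \<longleftrightarrow> (\<forall>\<Psi> a b. entails {Neg a} b \<longrightarrow>
     alpha_eq a (Bel (c (c \<Psi> a) b)) (Bel (c \<Psi> b)))"

definition C9 :: "('e \<Rightarrow> 'v fm set) \<Rightarrow> ('e \<Rightarrow> 'v fm \<Rightarrow> 'e) \<Rightarrow> bool" where
  "C9 Bel c \<longleftrightarrow> (\<forall>\<Psi> a b. entails {a} b \<longrightarrow>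
     alpha_eq (Neg b) (Bel (c (c \<Psi> a) b)) (Bel (c \<Psi> b)))"

definition represents ::
  "('e \<Rightarrow> 'v fm set) \<Rightarrow> ('e \<Rightarrow> 'v fm \<Rightarrow> 'e) \<Rightarrow> ('e \<Rightarrow> 'v world \<Rightarrow> 'v world \<Rightarrow> bool) \<Rightarrow> bool"
  where "represents Bel c ord \<longleftrightarrow>
    (\<forall>\<Psi> a. modsSet (Bel (c \<Psi> a)) = modsSet (Bel \<Psi>) \<union> minset (mods (Neg a)) (ord \<Psi>))"

definition CR8 :: "('e \<Rightarrow> 'v fm \<Rightarrow> 'e) \<Rightarrow> ('e \<Rightarrow> 'v world \<Rightarrow> 'v world \<Rightarrow> bool) \<Rightarrow> bool" where
  "CR8 c ord \<longleftrightarrow> (\<forall>\<Psi> a w1 w2. w1 \<in> mods a \<longrightarrow> w2 \<in> mods a \<longrightarrow>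
     (ord \<Psi> w1 w2 \<longleftrightarrow> ord (c \<Psi> a) w1 w2))"

definition CR9 :: "('e \<Rightarrow> 'v fm \<Rightarrow> 'e) \<Rightarrow> ('e \<Rightarrow> 'v world \<Rightarrow> 'v world \<Rightarrow> bool) \<Rightarrow> bool" where
  "CR9 c ord \<longleftrightarrow> (\<forall>\<Psi> a w1 w2. w1 \<in> mods (Neg a) \<longrightarrow> w2 \<in> mods (Neg a) \<longrightarrow>
     (ord \<Psi> w1 w2 \<longleftrightarrow> ord (c \<Psi> a) w1 w2))"

lemma mods_Neg [simp]: "mods (Neg a) = - mods a"
  and mods_Conj [simp]: "mods (Conj a b) = mods a \<inter> mods b"
  and mods_Top [simp]: "mods Top = UNIV"
  by (auto simp: mods_def)

lemma modsSet_singleton [simp]: "modsSet {a} = mods a"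
  by (auto simp: modsSet_def mods_def)

lemma modsSet_insert: "modsSet (insert a X) = mods a \<inter> modsSet X"
  by (auto simp: modsSet_def mods_def)

lemma modsSet_antimono: "X \<subseteq> Y \<Longrightarrow> modsSet Y \<subseteq> modsSet X"
  by (auto simp: modsSet_def)

lemma modsSet_Cn [simp]: "modsSet (Cn X) = modsSet X"
  by (auto simp: modsSet_def Cn_def entails_def mods_def)

lemma entails_singleton_iff: "entails {a} b \<longleftrightarrow> mods a \<subseteq> mods b"
  by (simp add: entails_def)

lemma minset_cong:
  "(\<And>w1 w2. w1 \<in> S \<Longrightarrow> w2 \<in> S \<Longrightarrow> le w1 w2 \<longleftrightarrow> le' w1 w2) \<Longrightarrow> minset S le = minset S le'"
  unfolding minset_def by blast

lemma mods_contr_contr: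
  fixes Bel :: "'e \<Rightarrow> 'v fm set" and c :: "'e \<Rightarrow> 'v fm \<Rightarrow> 'e"
    and ord :: "'e \<Rightarrow> 'v world \<Rightarrow> 'v world \<Rightarrow> bool"
  assumes rep: "represents Bel c ord"
    and same_min: "minset (- mods b) (ord (c \<Psi> a)) = minset (- mods b) (ord \<Psi>)"
  shows "modsSet (Bel (c (c \<Psi> a) b)) = modsSet (Bel (c \<Psi> b)) \<union> minset (- mods a) (ord \<Psi>)"
  using rep same_min unfolding represents_def by auto

lemma C8_if_CR8:
  fixes Bel :: "'e \<Rightarrow> 'v fm set" and c :: "'e \<Rightarrow> 'v fm \<Rightarrow> 'e"
    and ord :: "'e \<Rightarrow> 'v world \<Rightarrow> 'v world \<Rightarrow> bool"
  assumes rep: "represents Bel c ord" and cr8: "CR8 c ord"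
  shows "C8 Bel c"
  unfolding C8_def
proof (intro allI impI)
  fix \<Psi> and a b :: "'v fm" assume "entails {Neg a} b"
  then have sub: "- mods b \<subseteq> mods a" by (auto simp: entails_singleton_iff)
  have "ord (c \<Psi> a) w1 w2 \<longleftrightarrow> ord \<Psi> w1 w2" if "w1 \<in> - mods b" "w2 \<in> - mods b" for w1 w2
    using cr8 sub that unfolding CR8_def by (metis subsetD)
  then have "minset (- mods b) (ord (c \<Psi> a)) = minset (- mods b) (ord \<Psi>)"
    by (rule minset_cong)
  from mods_contr_contr[OF rep this]
  show "alpha_eq a (Bel (c (c \<Psi> a) b)) (Bel (c \<Psi> b))"
    unfolding alpha_eq_def by (auto simp: minset_def)
qed

lemma C9_if_CR9:
  fixes Bel :: "'e \<Rightarrow> 'v fm set" and c :: "'e \<Rightarrow> 'v fm \<Rightarrow> 'e"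
    and ord :: "'e \<Rightarrow> 'v world \<Rightarrow> 'v world \<Rightarrow> bool"
  assumes rep: "represents Bel c ord" and cr9: "CR9 c ord"
  shows "C9 Bel c"
  unfolding C9_def
proof (intro allI impI)
  fix \<Psi> and a b :: "'v fm" assume "entails {a} b"
  then have sub: "- mods b \<subseteq> - mods a" by (auto simp: entails_singleton_iff)
  have "ord (c \<Psi> a) w1 w2 \<longleftrightarrow> ord \<Psi> w1 w2" if "w1 \<in> - mods b" "w2 \<in> - mods b" for w1 w2
    using cr9 sub that unfolding CR9_def by (metis mods_Neg subsetD)
  then have "minset (- mods b) (ord (c \<Psi> a)) = minset (- mods b) (ord \<Psi>)"
    by (rule minset_cong)
  from mods_contr_contr[OF rep this]
  have "modsSet (Bel (c (c \<Psi> a) b)) = modsSet (Bel (c \<Psi> b)) \<union> minset (- mods a) (ord \<Psi>)" .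
  moreover have "minset (- mods a) (ord \<Psi>) - mods b \<subseteq> modsSet (Bel (c \<Psi> b))"
    using rep sub unfolding represents_def minset_def by auto
  ultimately show "alpha_eq (Neg b) (Bel (c (c \<Psi> a) b)) (Bel (c \<Psi> b))"
    unfolding alpha_eq_def by auto
qed

lemma ex_fm_agreeing_on: "\<exists>a. \<forall>u. sat u a \<longleftrightarrow> (\<forall>p\<in>set ps. u p = w p)"
proof (induction ps)
  case Nil
  show ?case by (rule exI[of _ Top]) simp
next
  case (Cons p ps)
  then obtain a where "\<forall>u. sat u a \<longleftrightarrow> (\<forall>p\<in>set ps. u p = w p)" by blast
  then have "\<forall>u. sat u (Conj (if w p then Var p else Neg (Var p)) a)
      \<longleftrightarrow> (\<forall>q\<in>set (p # ps). u q = w q)"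
    by (cases "w p") auto
  then show ?case by blast
qed

lemma ex_fm_mods_singleton: "\<exists>a. mods a = {w :: ('v::finite) world}"
proof -
  obtain ps where ps: "set ps = (UNIV :: 'v set)" using finite_list[OF finite_UNIV] ..
  obtain a where a: "\<forall>u. sat u a \<longleftrightarrow> (\<forall>p\<in>set ps. u p = w p)"
    using ex_fm_agreeing_on ..
  have "sat u a \<longleftrightarrow> u = w" for u using a ps by (simp add: fun_eq_iff)
  then have "mods a = {w}" by (auto simp: mods_def)
  then show ?thesis ..
qed

lemma ex_fm_mods: "\<exists>a. mods a = (S :: ('v::finite) world set)"
  using finite_subset[OF subset_UNIV finite_UNIV, of S]
proof (induction S rule: finite_induct)
  case empty
  have "mods Bot = {}" by (simp add: mods_def)
  then show ?case ..
next
  case (insert w S)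
  obtain a where "mods a = S" using insert.IH ..
  moreover obtain b where "mods b = {w}" using ex_fm_mods_singleton ..
  ultimately have "mods (Disj b a) = insert w S" by (auto simp: mods_def)
  then show ?case ..
qed

definition fm_of :: "('v::finite) world set \<Rightarrow> 'v fm" where
  "fm_of S = (SOME a. mods a = S)"

lemma mods_fm_of [simp]: "mods (fm_of S) = S"
  unfolding fm_of_def using ex_fm_mods by (rule someI_ex)

lemma bel_closed_mem_iff: "bel_closed Bel \<Longrightarrow> a \<in> Bel \<Psi> \<longleftrightarrow> modsSet (Bel \<Psi>) \<subseteq> mods a"
  unfolding bel_closed_def by (metis Cn_def entails_def mem_Collect_eq)

lemma bel_closed_subset_iff:
  "bel_closed Bel \<Longrightarrow> Bel \<Psi> \<subseteq> Bel \<Phi> \<longleftrightarrow> modsSet (Bel \<Phi>) \<subseteq> modsSet (Bel \<Psi>)"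
  using bel_closed_mem_iff[of Bel] modsSet_antimono by (metis subsetI order_trans)

lemma bel_closed_modsSet_Int:
  fixes Bel :: "'e \<Rightarrow> ('v::finite) fm set"
  assumes "bel_closed Bel"
  shows "modsSet (Bel \<Psi> \<inter> Bel \<Phi>) = modsSet (Bel \<Psi>) \<union> modsSet (Bel \<Phi>)"
proof
  show "modsSet (Bel \<Psi>) \<union> modsSet (Bel \<Phi>) \<subseteq> modsSet (Bel \<Psi> \<inter> Bel \<Phi>)"
    by (intro Un_least modsSet_antimono) auto
  show "modsSet (Bel \<Psi> \<inter> Bel \<Phi>) \<subseteq> modsSet (Bel \<Psi>) \<union> modsSet (Bel \<Phi>)"
  proof (rule subsetI, rule ccontr)
    fix w
    assume w: "w \<in> modsSet (Bel \<Psi> \<inter> Bel \<Phi>)" and "w \<notin> modsSet (Bel \<Psi>) \<union> modsSet (Bel \<Phi>)"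
    then have "fm_of (- {w}) \<in> Bel \<Psi> \<inter> Bel \<Phi>"
      using bel_closed_mem_iff[OF assms] by auto
    with w have "w \<in> mods (fm_of (- {w}))" by (auto simp: modsSet_def mods_def)
    then show False by simp
  qed
qed

locale agm_contraction_op =
  fixes Bel :: "'e \<Rightarrow> ('v::finite) fm set" and c :: "'e \<Rightarrow> 'v fm \<Rightarrow> 'e"
  assumes closed: "bel_closed Bel" and agm: "agm_contraction Bel c"
begin

abbreviation bel_mods :: "'e \<Rightarrow> 'v world set" where
  "bel_mods \<Psi> \<equiv> modsSet (Bel \<Psi>)"

lemma mods_contr_inclusion: "bel_mods \<Psi> \<subseteq> bel_mods (c \<Psi> a)"
proof -
  have "Bel (c \<Psi> a) \<subseteq> Bel \<Psi>" using agm unfolding agm_contraction_def by blast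
  then show ?thesis using bel_closed_subset_iff[OF closed] by blast
qed

lemma mods_contr_vacuity:
  assumes "bel_mods \<Psi> - mods a \<noteq> {}"
  shows "bel_mods (c \<Psi> a) = bel_mods \<Psi>"
proof -
  have "a \<notin> Bel \<Psi>" using assms bel_closed_mem_iff[OF closed] by blast
  then have "Bel \<Psi> \<subseteq> Bel (c \<Psi> a)" using agm unfolding agm_contraction_def by blast
  then show ?thesis using mods_contr_inclusion bel_closed_subset_iff[OF closed] by blast
qed

lemma mods_contr_success:
  assumes "mods a \<noteq> UNIV"
  shows "bel_mods (c \<Psi> a) - mods a \<noteq> {}"
proof -
  have "\<not> fequiv a Top" using assms by (simp add: fequiv_def)
  then have "a \<notin> Bel (c \<Psi> a)" using agm unfolding agm_contraction_def by blast
  then show ?thesis using bel_closed_mem_iff[OF closed] by blast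
qed

lemma mods_contr_recovery: "bel_mods (c \<Psi> a) \<inter> mods a \<subseteq> bel_mods \<Psi>"
proof -
  have "Bel \<Psi> \<subseteq> Cn (Bel (c \<Psi> a) \<union> {a})" using agm unfolding agm_contraction_def by blast
  from modsSet_antimono[OF this] show ?thesis by (simp add: modsSet_insert Int_commute)
qed

lemma mods_contr_extensionality: "mods a = mods b \<Longrightarrow> bel_mods (c \<Psi> a) = bel_mods (c \<Psi> b)"
  using agm unfolding agm_contraction_def fequiv_def by metis

lemma mods_contr_Conj_subset:
  "bel_mods (c \<Psi> (Conj a b)) \<subseteq> bel_mods (c \<Psi> a) \<union> bel_mods (c \<Psi> b)"
proof -
  have "Bel (c \<Psi> a) \<inter> Bel (c \<Psi> b) \<subseteq> Bel (c \<Psi> (Conj a b))"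
    using agm unfolding agm_contraction_def by blast
  from modsSet_antimono[OF this] show ?thesis by (simp add: bel_closed_modsSet_Int[OF closed])
qed

lemma mods_contr_Conj_superset:
  assumes "bel_mods (c \<Psi> (Conj a b)) - mods b \<noteq> {}"
  shows "bel_mods (c \<Psi> b) \<subseteq> bel_mods (c \<Psi> (Conj a b))"
proof -
  have "b \<notin> Bel (c \<Psi> (Conj a b))" using assms bel_closed_mem_iff[OF closed] by blast
  then have "Bel (c \<Psi> (Conj a b)) \<subseteq> Bel (c \<Psi> b)" using agm unfolding agm_contraction_def by blast
  then show ?thesis using bel_closed_subset_iff[OF closed] by blast
qed

definition contr_worlds :: "'e \<Rightarrow> 'v world set \<Rightarrow> 'v world set" where
  "contr_worlds \<Psi> S = bel_mods (c \<Psi> (fm_of (- S)))"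

lemma mods_contr_eq_contr_worlds: "bel_mods (c \<Psi> a) = contr_worlds \<Psi> (- mods a)"
  unfolding contr_worlds_def by (rule mods_contr_extensionality) simp

lemma contr_worlds_inclusion: "bel_mods \<Psi> \<subseteq> contr_worlds \<Psi> S"
  unfolding contr_worlds_def by (rule mods_contr_inclusion)

lemma contr_worlds_vacuity: "bel_mods \<Psi> \<inter> S \<noteq> {} \<Longrightarrow> contr_worlds \<Psi> S = bel_mods \<Psi>"
  unfolding contr_worlds_def by (rule mods_contr_vacuity) (simp add: Diff_eq)

lemma contr_worlds_success: "S \<noteq> {} \<Longrightarrow> contr_worlds \<Psi> S \<inter> S \<noteq> {}"
  unfolding contr_worlds_def using mods_contr_success[of "fm_of (- S)" \<Psi>]
  by (auto simp: Diff_eq)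

lemma contr_worlds_recovery: "contr_worlds \<Psi> S - S \<subseteq> bel_mods \<Psi>"
  unfolding contr_worlds_def using mods_contr_recovery[of \<Psi> "fm_of (- S)"]
  by (simp add: Diff_eq)

lemma contr_worlds_Un_eq_Conj:
  "contr_worlds \<Psi> (S \<union> T) = bel_mods (c \<Psi> (Conj (fm_of (- S)) (fm_of (- T))))"
  unfolding contr_worlds_def by (rule mods_contr_extensionality) simp

lemma contr_worlds_Un_subset:
  "contr_worlds \<Psi> (S \<union> T) \<subseteq> contr_worlds \<Psi> S \<union> contr_worlds \<Psi> T"
  unfolding contr_worlds_Un_eq_Conj by (simp add: contr_worlds_def mods_contr_Conj_subset)

lemma contr_worlds_Un_superset:
  "contr_worlds \<Psi> (S \<union> T) \<inter> T \<noteq> {} \<Longrightarrow> contr_worlds \<Psi> T \<subseteq> contr_worlds \<Psi> (S \<union> T)"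
  unfolding contr_worlds_Un_eq_Conj
  using mods_contr_Conj_superset[of \<Psi> "fm_of (- S)" "fm_of (- T)"] by (simp add: contr_worlds_def Diff_eq)

lemma contr_worlds_restrict:
  assumes "w \<in> contr_worlds \<Psi> S" and "w \<in> T" and "T \<subseteq> S"
  shows "w \<in> contr_worlds \<Psi> T"
proof -
  have "S = T \<union> (S - T)" using assms(3) by blast
  then have "w \<in> contr_worlds \<Psi> T \<or> w \<in> contr_worlds \<Psi> (S - T)"
    using contr_worlds_Un_subset[of \<Psi> T "S - T"] assms(1) by auto
  moreover have "w \<notin> contr_worlds \<Psi> (S - T) \<or> w \<in> bel_mods \<Psi>"
    using contr_worlds_recovery[of \<Psi> "S - T"] assms(2) by blast
  ultimately show ?thesis using contr_worlds_inclusion by blast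
qed

lemma contr_worlds_mono:
  "T \<subseteq> S \<Longrightarrow> contr_worlds \<Psi> S \<inter> T \<noteq> {} \<Longrightarrow> contr_worlds \<Psi> T \<subseteq> contr_worlds \<Psi> S"
  using contr_worlds_Un_superset[of \<Psi> S T] by (simp add: Un_absorb2)

definition canon_ord :: "'e \<Rightarrow> 'v world \<Rightarrow> 'v world \<Rightarrow> bool" where
  "canon_ord \<Psi> w1 w2 \<longleftrightarrow> w1 \<in> contr_worlds \<Psi> {w1, w2}"

lemma canon_ord_total: "canon_ord \<Psi> x y \<or> canon_ord \<Psi> y x"
proof -
  have "contr_worlds \<Psi> {x, y} \<inter> {x, y} \<noteq> {}" by (rule contr_worlds_success) simp
  then show ?thesis unfolding canon_ord_def by (auto simp: insert_commute)
qed

lemma canon_ord_trans: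
  assumes xy: "canon_ord \<Psi> x y" and yz: "canon_ord \<Psi> y z"
  shows "canon_ord \<Psi> x z"
proof -
  let ?S = "{x, y, z}"
  have x_if_y: "x \<in> contr_worlds \<Psi> ?S" if "y \<in> contr_worlds \<Psi> ?S"
    using contr_worlds_mono[of "{x, y}" ?S \<Psi>] that xy unfolding canon_ord_def by blast
  have y_if_z: "y \<in> contr_worlds \<Psi> ?S" if "z \<in> contr_worlds \<Psi> ?S"
    using contr_worlds_mono[of "{y, z}" ?S \<Psi>] that yz unfolding canon_ord_def by blast
  have "contr_worlds \<Psi> ?S \<inter> ?S \<noteq> {}" by (rule contr_worlds_success) simp
  then have "x \<in> contr_worlds \<Psi> ?S" using x_if_y y_if_z by blast
  then show ?thesis unfolding canon_ord_def by (rule contr_worlds_restrict) auto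
qed

lemma faithful_assignment_canon_ord: "faithful_assignment Bel canon_ord"
  unfolding faithful_assignment_def total_preorder_def
proof (intro allI conjI impI)
  fix \<Psi> x y z
  show "canon_ord \<Psi> x y \<or> canon_ord \<Psi> y x" by (rule canon_ord_total)
  show "canon_ord \<Psi> x y \<Longrightarrow> canon_ord \<Psi> y z \<Longrightarrow> canon_ord \<Psi> x z" by (rule canon_ord_trans)
next
  fix \<Psi> w1 w2 assume "w1 \<in> bel_mods \<Psi>" "w2 \<in> bel_mods \<Psi>"
  then show "canon_ord \<Psi> w1 w2" "canon_ord \<Psi> w2 w1"
    unfolding canon_ord_def using contr_worlds_inclusion by blast+
next
  fix \<Psi> w1 w2 assume w: "w1 \<in> bel_mods \<Psi>" "w2 \<notin> bel_mods \<Psi>"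
  then show "canon_ord \<Psi> w1 w2" unfolding canon_ord_def using contr_worlds_inclusion by blast
  have "contr_worlds \<Psi> {w2, w1} = bel_mods \<Psi>" by (rule contr_worlds_vacuity) (use w in auto)
  then show "\<not> canon_ord \<Psi> w2 w1" using w unfolding canon_ord_def by simp
qed

lemma minset_canon_ord:
  assumes "S \<noteq> {}"
  shows "minset S (canon_ord \<Psi>) = contr_worlds \<Psi> S \<inter> S"
proof (intro equalityI subsetI)
  fix w assume w: "w \<in> contr_worlds \<Psi> S \<inter> S"
  have "canon_ord \<Psi> w w'" if "w' \<in> S" for w'
    unfolding canon_ord_def by (rule contr_worlds_restrict[of w \<Psi> S]) (use w that in auto)
  with w show "w \<in> minset S (canon_ord \<Psi>)" unfolding minset_def by blast
next
  fix w assume w: "w \<in> minset S (canon_ord \<Psi>)"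
  then have "w \<in> S" unfolding minset_def by blast
  obtain v where v: "v \<in> contr_worlds \<Psi> S" "v \<in> S" using contr_worlds_success[OF assms] by blast
  with w have "w \<in> contr_worlds \<Psi> {w, v}" unfolding minset_def canon_ord_def by blast
  moreover have "contr_worlds \<Psi> {w, v} \<subseteq> contr_worlds \<Psi> S"
    by (rule contr_worlds_mono) (use \<open>w \<in> S\<close> v in auto)
  ultimately show "w \<in> contr_worlds \<Psi> S \<inter> S" using \<open>w \<in> S\<close> by blast
qed

lemma contr_worlds_eq_minset: "contr_worlds \<Psi> S = bel_mods \<Psi> \<union> minset S (canon_ord \<Psi>)"
proof -
  have split: "contr_worlds \<Psi> S = bel_mods \<Psi> \<union> (contr_worlds \<Psi> S \<inter> S)"
    using contr_worlds_inclusion[of \<Psi> S] contr_worlds_recovery[of \<Psi> S] by blast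
  show ?thesis
  proof (cases "S = {}")
    case True
    then show ?thesis using split by (simp add: minset_def)
  next
    case False
    then show ?thesis using split by (simp add: minset_canon_ord)
  qed
qed

lemma represents_canon_ord: "represents Bel c canon_ord"
  unfolding represents_def mods_contr_eq_contr_worlds contr_worlds_eq_minset by simp

lemma CR8_canon_ord:
  assumes "C8 Bel c"
  shows "CR8 c canon_ord"
  unfolding CR8_def
proof (intro allI impI)
  fix \<Psi> a and w1 w2 :: "'v world" assume w: "w1 \<in> mods a" "w2 \<in> mods a"
  let ?b = "fm_of (- {w1, w2})"
  have "entails {Neg a} ?b" using w by (auto simp: entails_singleton_iff)
  with assms have "alpha_eq a (Bel (c (c \<Psi> a) ?b)) (Bel (c \<Psi> ?b))" unfolding C8_def by blast
  with w show "canon_ord \<Psi> w1 w2 \<longleftrightarrow> canon_ord (c \<Psi> a) w1 w2"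
    unfolding canon_ord_def contr_worlds_def alpha_eq_def by blast
qed

lemma CR9_canon_ord:
  assumes "C9 Bel c"
  shows "CR9 c canon_ord"
  unfolding CR9_def
proof (intro allI impI)
  fix \<Psi> a and w1 w2 :: "'v world" assume w: "w1 \<in> mods (Neg a)" "w2 \<in> mods (Neg a)"
  let ?b = "fm_of (- {w1, w2})"
  have "entails {a} ?b" using w by (auto simp: entails_singleton_iff)
  with assms have "alpha_eq (Neg ?b) (Bel (c (c \<Psi> a) ?b)) (Bel (c \<Psi> ?b))" unfolding C9_def by blast
  then show "canon_ord \<Psi> w1 w2 \<longleftrightarrow> canon_ord (c \<Psi> a) w1 w2"
    unfolding canon_ord_def contr_worlds_def alpha_eq_def by auto
qed

lemma C8_C9_iff_representation:
  "C8 Bel c \<and> C9 Bel c \<longleftrightarrow>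
    (\<exists>ord. faithful_assignment Bel ord \<and> represents Bel c ord \<and> CR8 c ord \<and> CR9 c ord)"
  using faithful_assignment_canon_ord represents_canon_ord CR8_canon_ord CR9_canon_ord
    C8_if_CR8 C9_if_CR9 by blast

end

theorem mainTheorem4:
  fixes Bel :: "'e \<Rightarrow> ('v::finite) fm set"
    and c :: "'e \<Rightarrow> 'v fm \<Rightarrow> 'e"
  assumes "bel_closed Bel"
    and "agm_contraction Bel c"
  shows "((\<forall>\<Psi> a b. entails {Neg a} b \<longrightarrow>
              alpha_eq a (Bel (c (c \<Psi> a) b)) (Bel (c \<Psi> b)))
        \<and> (\<forall>\<Psi> a b. entails {a} b \<longrightarrow>
              alpha_eq (Neg b) (Bel (c (c \<Psi> a) b)) (Bel (c \<Psi> b))))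
     \<longleftrightarrow>
     (\<exists>ord. faithful_assignment Bel ord
        \<and> (\<forall>\<Psi> a. modsSet (Bel (c \<Psi> a)) = modsSet (Bel \<Psi>) \<union> minset (mods (Neg a)) (ord \<Psi>))
        \<and> (\<forall>\<Psi> a w1 w2. w1 \<in> mods a \<longrightarrow> w2 \<in> mods a \<longrightarrow>
              (ord \<Psi> w1 w2 \<longleftrightarrow> ord (c \<Psi> a) w1 w2))
        \<and> (\<forall>\<Psi> a w1 w2. w1 \<in> mods (Neg a) \<longrightarrow> w2 \<in> mods (Neg a) \<longrightarrow>
              (ord \<Psi> w1 w2 \<longleftrightarrow> ord (c \<Psi> a) w1 w2)))"
proof -
  interpret agm_contraction_op Bel c using assms by unfold_locales
  show ?thesis
    using C8_C9_iff_representation unfolding C8_def C9_def represents_def CR8_def CR9_def .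
qed

end
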